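(* Let $\Omega$ be a program with weight constraints, $Z$ a consistent set of literals, and $\Pi_1$ the program consisting of the rules $l\leftarrow\mathit{not}\,\mathit{not}\,l,[C_1],\dots,[C_n]$ for every rule $C_0\leftarrow C_1,\dots,C_n$ of $\Omega$ and every positive head element $l$ of that rule. If $\mathit{cl}(\Omega^Z)$ is consistent then it is the only answer set of the program $\Pi_1^Z$; otherwise $\Pi_1^Z$ has no answer sets.
   Context: A literal is an atom $a$ or $\neg a$; a set of literals is consistent if it contains no pair $a,\neg a$. Formulas are built from literals, $\bot$, $\top$ using $\mathit{not}$, "," (conjunction), ";" (disjunction). For a set $Z$ of literals: $Z\models l$ iff $l\in Z$; $Z\models\top$; $Z\not\models\bot$; $Z\models(F,G)$ iff both; $Z\models(F;G)$ iff at least one; $Z\models\mathit{not}\,F$ iff $Z\not\models F$; $Z$ satisfies a set of rules $\mathit{Head}\leftarrow\mathit{Body}$ if $Z\models\mathit{Body}$ implies $Z\models\mathit{Head}$ for each. Reduct: $F^Z=F$ for $F$ a literal, $\bot$, $\top$; $(F,G)^Z=F^Z,G^Z$; $(F;G)^Z=F^Z;G^Z$; $(\mathit{not}\,F)^Z=\bot$ if $Z\models F$, else $\top$; $\Pi^Z$ applies this to heads and bodies. A consistent set is an answer set of a $\mathit{not}$-free program if it is a minimal consistent set of literals satisfying it. $\langle F_1,\dots,F_n\rangle:X$ is the disjunction over $I\in X$ of the conjunctions of $F_i$, $i\in I$ (empty conjunction $\top$, empty disjunction $\bot$). A rule element is a literal $l$ (positive) or $\mathit{not}\,l$ (negative).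 A weight constraint is $L\le\{c_1=w_1,\dots,c_m=w_m\}\le U$ ($L,U$ reals or $\pm\infty$, $w_i\ge0$); $Z$ satisfies it if $L\le\sum_{j:Z\models c_j}w_j\le U$. A program with weight constraints is a set of rules $C_0\leftarrow C_1,\dots,C_n$; the rule elements of $C_0$ are the head elements. $(L\le S)^Z=L^Z\le S'$, where $S'$ drops the pairs with negative elements and $L^Z$ is $L$ minus the sum of weights of pairs $c=w$ with $c$ negative and $Z\models c$. The reduct of $L_0\le S_0\le U_0\leftarrow L_1\le S_1\le U_1,\dots,L_n\le S_n\le U_n$ is, if $Z$ satisfies $S_i\le U_i$ for all $1\le i\le n$, the set of rules $l\leftarrow(L_1\le S_1)^Z,\dots,(L_n\le S_n)^Z$ for all positive head elements $l$ with $l\in Z$; otherwise empty. $\Omega^Z$ is the union of the reducts of its rules; a set of literals satisfies $\Omega^Z$ if for each rule whose body constraints it satisfies it contains the head literal. $\mathit{cl}(\Omega^Z)$ (the deductive closure) is the unique minimal set of literals satisfying $\Omega^Z$. Translation: $[w\le S]=\langle c_1,\dots,c_m\rangle:\{I: w\le\sum_{i\in I}w_i\}$, $[w<S]=\langle c_1,\dots,c_m\rangle:\{I: w<\sum_{i\in I}w_i\}$, $[S\le U]=\mathit{not}\,[U<S]$, $[L\le S\le U]=[L\le S],[S\le U]$. *)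

theory Defs
  imports Complex_Main "HOL-Library.Extended_Real"
begin

datatype 'a lit = Atom 'a | NegAtom 'a

definition consistent :: "'a lit set \<Rightarrow> bool" where
  "consistent Z \<longleftrightarrow> (\<forall>a. \<not> (Atom a \<in> Z \<and> NegAtom a \<in> Z))"

datatype 'a fml = FLit "'a lit" | FBot | FTop | FNot "'a fml"
  | FAnd "'a fml" "'a fml" | FOr "'a fml" "'a fml"

fun fsat :: "'a lit set \<Rightarrow> 'a fml \<Rightarrow> bool" where
  "fsat Z (FLit l) = (l \<in> Z)"
| "fsat Z FBot = False"
| "fsat Z FTop = True"
| "fsat Z (FNot F) = (\<not> fsat Z F)"
| "fsat Z (FAnd F G) = (fsat Z F \<and> fsat Z G)"
| "fsat Z (FOr F G) = (fsat Z F \<or> fsat Z G)"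

fun freduct :: "'a lit set \<Rightarrow> 'a fml \<Rightarrow> 'a fml" where
  "freduct Z (FLit l) = FLit l"
| "freduct Z FBot = FBot"
| "freduct Z FTop = FTop"
| "freduct Z (FNot F) = (if fsat Z F then FBot else FTop)"
| "freduct Z (FAnd F G) = FAnd (freduct Z F) (freduct Z G)"
| "freduct Z (FOr F G) = FOr (freduct Z F) (freduct Z G)"

text \<open>A rule Head <- Body is a pair (Head, Body); a program is a set of rules.\<close>
type_synonym 'a frule = "'a fml \<times> 'a fml"

definition psat :: "'a lit set \<Rightarrow> 'a frule set \<Rightarrow> bool" where
  "psat Z P \<longleftrightarrow> (\<forall>(h, b) \<in> P. fsat Z b \<longrightarrow> fsat Z h)"

definition preduct :: "'a lit set \<Rightarrow> 'a frule set \<Rightarrow> 'a frule set" where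
  "preduct Z P = (\<lambda>(h, b). (freduct Z h, freduct Z b)) ` P"

definition answer_set_nf :: "'a frule set \<Rightarrow> 'a lit set \<Rightarrow> bool" where
  "answer_set_nf P Z \<longleftrightarrow> consistent Z \<and> psat Z P \<and>
     (\<forall>Y. consistent Y \<and> psat Y P \<and> Y \<subseteq> Z \<longrightarrow> Y = Z)"

fun bigand :: "'a fml list \<Rightarrow> 'a fml" where
  "bigand [] = FTop"
| "bigand [F] = F"
| "bigand (F # G # Fs) = FAnd F (bigand (G # Fs))"

fun bigor :: "'a fml list \<Rightarrow> 'a fml" where
  "bigor [] = FBot"
| "bigor [F] = F"
| "bigor (F # G # Fs) = FOr F (bigor (G # Fs))"

text \<open>Indices are 0-based; an index set I is an increasing list of indices.\<close>
definition indexed :: "'a fml list \<Rightarrow> nat list list \<Rightarrow> 'a fml" where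
  "indexed Fs X = bigor (map (\<lambda>I. bigand (map (\<lambda>i. Fs ! i) I)) X)"

datatype 'a elem = PosE "'a lit" | NegE "'a lit"

fun elem_fml :: "'a elem \<Rightarrow> 'a fml" where
  "elem_fml (PosE l) = FLit l"
| "elem_fml (NegE l) = FNot (FLit l)"

text \<open>WC L S U stands for L <= {c1=w1,...,cm=wm} <= U.\<close>
datatype 'a wc = WC ereal "('a elem \<times> real) list" ereal

type_synonym 'a wrule = "'a wc \<times> 'a wc list"   (* C0 <- C1,...,Cn *)

definition wsum :: "'a lit set \<Rightarrow> ('a elem \<times> real) list \<Rightarrow> real" where
  "wsum Z S = sum_list (map snd (filter (\<lambda>(c, w). fsat Z (elem_fml c)) S))"

fun wc_sat :: "'a lit set \<Rightarrow> 'a wc \<Rightarrow> bool" where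
  "wc_sat Z (WC L S U) = (L \<le> ereal (wsum Z S) \<and> ereal (wsum Z S) \<le> U)"

fun wc_nonneg :: "'a wc \<Rightarrow> bool" where
  "wc_nonneg (WC L S U) = (\<forall>(c, w) \<in> set S. 0 \<le> w)"

definition wprog_nonneg :: "'a wrule set \<Rightarrow> bool" where
  "wprog_nonneg \<Omega> \<longleftrightarrow> (\<forall>(C0, Cs) \<in> \<Omega>. wc_nonneg C0 \<and> (\<forall>C \<in> set Cs. wc_nonneg C))"

fun pos_heads :: "'a wc \<Rightarrow> 'a lit set" where
  "pos_heads (WC L S U) = {l. \<exists>w. (PosE l, w) \<in> set S}"

text \<open>Reduced constraint (L^Z <= S'): lower bound and the positive pairs.\<close>
type_synonym 'a rwc = "ereal \<times> ('a lit \<times> real) list"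
type_synonym 'a rrule = "'a lit \<times> 'a rwc list"

definition pos_part :: "('a elem \<times> real) list \<Rightarrow> ('a lit \<times> real) list" where
  "pos_part S = concat (map (\<lambda>(c, w). case c of PosE l \<Rightarrow> [(l, w)] | NegE _ \<Rightarrow> []) S)"

definition neg_part :: "('a elem \<times> real) list \<Rightarrow> ('a elem \<times> real) list" where
  "neg_part S = filter (\<lambda>(c, w). case c of PosE _ \<Rightarrow> False | NegE _ \<Rightarrow> True) S"

fun wc_reduct :: "'a lit set \<Rightarrow> 'a wc \<Rightarrow> 'a rwc" where
  "wc_reduct Z (WC L S U) = (L - ereal (wsum Z (neg_part S)), pos_part S)"

fun upper_ok :: "'a lit set \<Rightarrow> 'a wc \<Rightarrow> bool" where
  "upper_ok Z (WC L S U) = (ereal (wsum Z S) \<le> U)"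

fun wrule_reduct :: "'a lit set \<Rightarrow> 'a wrule \<Rightarrow> 'a rrule set" where
  "wrule_reduct Z (C0, Cs) =
     (if (\<forall>C \<in> set Cs. upper_ok Z C)
      then {(l, map (wc_reduct Z) Cs) | l. l \<in> pos_heads C0 \<and> l \<in> Z}
      else {})"

definition wprog_reduct :: "'a lit set \<Rightarrow> 'a wrule set \<Rightarrow> 'a rrule set" where
  "wprog_reduct Z \<Omega> = (\<Union>r \<in> \<Omega>. wrule_reduct Z r)"

fun rwc_sat :: "'a lit set \<Rightarrow> 'a rwc \<Rightarrow> bool" where
  "rwc_sat X (L, S) = (L \<le> ereal (sum_list (map snd (filter (\<lambda>(l, w). l \<in> X) S))))"

definition rsat :: "'a lit set \<Rightarrow> 'a rrule set \<Rightarrow> bool" where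
  "rsat X R \<longleftrightarrow> (\<forall>(l, Bs) \<in> R. (\<forall>B \<in> set Bs. rwc_sat X B) \<longrightarrow> l \<in> X)"

definition cl :: "'a rrule set \<Rightarrow> 'a lit set" where
  "cl R = (THE X. rsat X R \<and> (\<forall>Y. rsat Y R \<and> Y \<subseteq> X \<longrightarrow> Y = X))"

definition tr_ge :: "ereal \<Rightarrow> ('a elem \<times> real) list \<Rightarrow> 'a fml" where
  "tr_ge w S = indexed (map (elem_fml \<circ> fst) S)
     (filter (\<lambda>I. w \<le> ereal (sum_list (map (\<lambda>i. snd (S ! i)) I))) (subseqs [0..<length S]))"

definition tr_gt :: "ereal \<Rightarrow> ('a elem \<times> real) list \<Rightarrow> 'a fml" where
  "tr_gt w S = indexed (map (elem_fml \<circ> fst) S)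
     (filter (\<lambda>I. w < ereal (sum_list (map (\<lambda>i. snd (S ! i)) I))) (subseqs [0..<length S]))"

fun tr :: "'a wc \<Rightarrow> 'a fml" where
  "tr (WC L S U) = FAnd (tr_ge L S) (FNot (tr_gt U S))"

definition Pi1 :: "'a wrule set \<Rightarrow> 'a frule set" where
  "Pi1 \<Omega> = {(FLit l, bigand (FNot (FNot (FLit l)) # map tr Cs)) | l C0 Cs.
               (C0, Cs) \<in> \<Omega> \<and> l \<in> pos_heads C0}"

end

theory Submission
  imports Defs "HOL-Library.Sublist"
begin

text \<open>Since all weights are nonnegative, the disjunction over index sets in [L <= S] is
  satisfied iff the set of all satisfied elements reaches the bound. Under the reduct with respect
  to Z the negative elements are decided by Z, so, once the lower bound has absorbed their weight,
  the reduct of [L <= S] holds in X exactly when the reduced constraint does; [S <= U] sits under a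
  negation and becomes the test whether Z respects U, and not not l becomes the test l \<in> Z.
  Hence the reducts of \<Pi>1 and \<Omega> with respect to Z have the same models. The reduct of \<Omega>
  is monotone, so its models are closed under intersection and its deductive closure is its least
  model; a program with a least model M has M as its only answer set if M is consistent, and none
  otherwise.\<close>

lemma fsat_bigand: "fsat X (bigand Fs) \<longleftrightarrow> (\<forall>F\<in>set Fs. fsat X F)"
  by (induction Fs rule: bigand.induct) auto

lemma fsat_bigor: "fsat X (bigor Fs) \<longleftrightarrow> (\<exists>F\<in>set Fs. fsat X F)"
  by (induction Fs rule: bigor.induct) auto

lemma freduct_bigand: "freduct Z (bigand Fs) = bigand (map (freduct Z) Fs)"
  by (induction Fs rule: bigand.induct) auto

lemma freduct_bigor: "freduct Z (bigor Fs) = bigor (map (freduct Z) Fs)"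
  by (induction Fs rule: bigor.induct) auto

lemma fsat_indexed:
  "fsat X (indexed Fs Is) \<longleftrightarrow> (\<exists>I\<in>set Is. \<forall>i\<in>set I. fsat X (Fs ! i))"
  unfolding indexed_def by (simp add: fsat_bigor fsat_bigand)

lemma fsat_freduct_indexed:
  "fsat X (freduct Z (indexed Fs Is)) \<longleftrightarrow> (\<exists>I\<in>set Is. \<forall>i\<in>set I. fsat X (freduct Z (Fs ! i)))"
  unfolding indexed_def by (simp add: freduct_bigor freduct_bigand fsat_bigor fsat_bigand)

lemma sum_list_subseq_le:
  fixes g :: "'b \<Rightarrow> 'c::ordered_comm_monoid_add"
  assumes "subseq xs ys" and "\<forall>y\<in>set ys. 0 \<le> g y"
  shows "sum_list (map g xs) \<le> sum_list (map g ys)"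
  using assms
  by (induction rule: list_emb.induct) (auto intro!: sum_list_nonneg intro: add_mono add_increasing)

lemma ex_subseq_sum_threshold_iff:
  fixes g :: "'b \<Rightarrow> 'c::ordered_comm_monoid_add"
  assumes up: "\<And>a b. \<theta> a \<Longrightarrow> a \<le> b \<Longrightarrow> \<theta> b" and nonneg: "\<forall>x\<in>set xs. 0 \<le> g x"
  shows "(\<exists>I. subseq I xs \<and> (\<forall>i\<in>set I. Q i) \<and> \<theta> (sum_list (map g I)))
     \<longleftrightarrow> \<theta> (sum_list (map g (filter Q xs)))"
proof
  assume "\<exists>I. subseq I xs \<and> (\<forall>i\<in>set I. Q i) \<and> \<theta> (sum_list (map g I))"
  then obtain I where I: "subseq I xs" "\<forall>i\<in>set I. Q i" "\<theta> (sum_list (map g I))"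
    by blast
  from I have "subseq I (filter Q xs)"
    using subseq_filter[of I xs Q] by (simp add: filter_id_conv)
  then have "sum_list (map g I) \<le> sum_list (map g (filter Q xs))"
    using nonneg by (intro sum_list_subseq_le) auto
  with I(3) show "\<theta> (sum_list (map g (filter Q xs)))" by (rule up)
qed (intro exI[of _ "filter Q xs"], auto)

lemma sum_list_nth_filter_upt:
  "sum_list (map (\<lambda>i. snd (S ! i)) (filter (\<lambda>i. R (fst (S ! i))) [0..<length S]))
   = sum_list (map snd (filter (\<lambda>(c, w). R c) S))"
proof -
  have "map (nth S) (filter (\<lambda>i. R (fst (S ! i))) [0..<length S]) = filter (\<lambda>(c, w). R c) S"
    using filter_map[of "\<lambda>(c, w). R c" "nth S" "[0..<length S]"]
    by (simp add: comp_def case_prod_beta map_nth)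
  then have "map snd (map (nth S) (filter (\<lambda>i. R (fst (S ! i))) [0..<length S]))
      = map snd (filter (\<lambda>(c, w). R c) S)"
    by (rule arg_cong)
  then show ?thesis
    by (simp add: comp_def)
qed

lemma indexed_threshold_iff:
  fixes S :: "('a elem \<times> real) list"
  assumes up: "\<And>a b. \<theta> a \<Longrightarrow> a \<le> b \<Longrightarrow> \<theta> b" and nonneg: "\<forall>(c, w)\<in>set S. 0 \<le> w"
  shows "(\<exists>I\<in>set (filter (\<lambda>I. \<theta> (\<Sum>i\<leftarrow>I. snd (S ! i))) (subseqs [0..<length S])).
            \<forall>i\<in>set I. P (map (elem_fml \<circ> fst) S ! i))
     \<longleftrightarrow> \<theta> (sum_list (map snd (filter (\<lambda>(c, w). P (elem_fml c)) S)))"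
proof -
  have nth_map_fst: "subseq I [0..<length S] \<Longrightarrow> i \<in> set I
      \<Longrightarrow> map (elem_fml \<circ> fst) S ! i = elem_fml (fst (S ! i))" for I i
    by (erule list_emb_set) auto
  have "(\<exists>I\<in>set (filter (\<lambda>I. \<theta> (\<Sum>i\<leftarrow>I. snd (S ! i))) (subseqs [0..<length S])).
            \<forall>i\<in>set I. P (map (elem_fml \<circ> fst) S ! i))
     \<longleftrightarrow> (\<exists>I. subseq I [0..<length S] \<and> (\<forall>i\<in>set I. P (map (elem_fml \<circ> fst) S ! i))
            \<and> \<theta> (\<Sum>i\<leftarrow>I. snd (S ! i)))"
    by (simp only: set_filter mem_Collect_eq in_set_subseqs Bex_def) blast
  also have "\<dots> \<longleftrightarrow> (\<exists>I. subseq I [0..<length S] \<and> (\<forall>i\<in>set I. P (elem_fml (fst (S ! i))))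
            \<and> \<theta> (\<Sum>i\<leftarrow>I. snd (S ! i)))"
    by (rule ex_cong1) (metis nth_map_fst)
  also have "\<dots> \<longleftrightarrow> \<theta> (\<Sum>i\<leftarrow>filter (\<lambda>i. P (elem_fml (fst (S ! i)))) [0..<length S]. snd (S ! i))"
    using nonneg by (intro ex_subseq_sum_threshold_iff[OF up]) (auto simp: case_prod_beta)
  also have "\<dots> \<longleftrightarrow> \<theta> (sum_list (map snd (filter (\<lambda>(c, w). P (elem_fml c)) S)))"
    by (simp only: sum_list_nth_filter_upt[of S "\<lambda>c. P (elem_fml c)"])
  finally show ?thesis .
qed

lemma fsat_tr_gt:
  assumes "\<forall>(c, w)\<in>set S. 0 \<le> w"
  shows "fsat Z (tr_gt U S) \<longleftrightarrow> U < ereal (wsum Z S)"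
  unfolding tr_gt_def fsat_indexed wsum_def
  by (rule indexed_threshold_iff[OF _ assms]) (meson ereal_less_eq(3) less_le_trans)

lemma sum_fsat_freduct_elems:
  "sum_list (map snd (filter (\<lambda>(c, w). fsat X (freduct Z (elem_fml c))) S))
   = sum_list (map snd (filter (\<lambda>(l, w). l \<in> X) (pos_part S))) + wsum Z (neg_part S)"
proof (induction S)
  case Nil
  then show ?case by (simp add: pos_part_def neg_part_def wsum_def)
next
  case (Cons p S)
  then show ?case
    by (cases p; cases "fst p") (auto simp: pos_part_def neg_part_def wsum_def)
qed

lemma fsat_freduct_tr_ge:
  assumes "\<forall>(c, w)\<in>set S. 0 \<le> w"
  shows "fsat X (freduct Z (tr_ge L S)) \<longleftrightarrow> rwc_sat X (wc_reduct Z (WC L S U))"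
proof -
  have "fsat X (freduct Z (tr_ge L S)) \<longleftrightarrow>
     L \<le> ereal (sum_list (map snd (filter (\<lambda>(c, w). fsat X (freduct Z (elem_fml c))) S)))"
    unfolding tr_ge_def fsat_freduct_indexed
    by (rule indexed_threshold_iff[OF _ assms]) (meson ereal_less_eq(3) order_trans)
  also have "\<dots> \<longleftrightarrow> rwc_sat X (wc_reduct Z (WC L S U))"
    by (cases L) (auto simp: sum_fsat_freduct_elems)
  finally show ?thesis .
qed

lemma fsat_freduct_tr:
  assumes "wc_nonneg C"
  shows "fsat X (freduct Z (tr C)) \<longleftrightarrow> upper_ok Z C \<and> rwc_sat X (wc_reduct Z C)"
proof (cases C)
  case (WC L S U)
  with assms have "\<forall>(c, w)\<in>set S. 0 \<le> w" by simp
  with WC show ?thesis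
    by (auto simp: fsat_tr_gt fsat_freduct_tr_ge not_less simp del: wc_reduct.simps)
qed

lemma fsat_freduct_Pi1_body:
  assumes "\<forall>C\<in>set Cs. wc_nonneg C"
  shows "fsat X (freduct Z (bigand (FNot (FNot (FLit l)) # map tr Cs)))
     \<longleftrightarrow> l \<in> Z \<and> (\<forall>C\<in>set Cs. upper_ok Z C \<and> rwc_sat X (wc_reduct Z C))"
  using assms by (auto simp: freduct_bigand fsat_bigand fsat_freduct_tr)

lemma psat_preduct_Pi1:
  "psat X (preduct Z (Pi1 \<Omega>)) \<longleftrightarrow> (\<forall>(C0, Cs)\<in>\<Omega>. \<forall>l\<in>pos_heads C0.
     fsat X (freduct Z (bigand (FNot (FNot (FLit l)) # map tr Cs))) \<longrightarrow> l \<in> X)"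
  unfolding psat_def preduct_def Pi1_def by fastforce

lemma mem_wrule_reduct:
  "(l, Bs) \<in> wrule_reduct Z (C0, Cs) \<longleftrightarrow>
     l \<in> pos_heads C0 \<and> l \<in> Z \<and> (\<forall>C\<in>set Cs. upper_ok Z C) \<and> Bs = map (wc_reduct Z) Cs"
  by (auto simp del: pos_heads.simps)

lemma rsat_wprog_reduct:
  "rsat X (wprog_reduct Z \<Omega>) \<longleftrightarrow> (\<forall>(C0, Cs)\<in>\<Omega>. \<forall>l\<in>pos_heads C0.
     l \<in> Z \<and> (\<forall>C\<in>set Cs. upper_ok Z C \<and> rwc_sat X (wc_reduct Z C)) \<longrightarrow> l \<in> X)"
proof -
  have "rsat X (wprog_reduct Z \<Omega>) \<longleftrightarrow> (\<forall>(C0, Cs)\<in>\<Omega>. \<forall>l Bs.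
     (l, Bs) \<in> wrule_reduct Z (C0, Cs) \<longrightarrow> (\<forall>B\<in>set Bs. rwc_sat X B) \<longrightarrow> l \<in> X)"
    unfolding rsat_def wprog_reduct_def by (auto simp del: wrule_reduct.simps)
  then show ?thesis
    unfolding mem_wrule_reduct by auto
qed

lemma psat_preduct_Pi1_iff_rsat:
  assumes "wprog_nonneg \<Omega>"
  shows "psat X (preduct Z (Pi1 \<Omega>)) \<longleftrightarrow> rsat X (wprog_reduct Z \<Omega>)"
proof -
  have body: "fsat X (freduct Z (bigand (FNot (FNot (FLit l)) # map tr Cs)))
     \<longleftrightarrow> l \<in> Z \<and> (\<forall>C\<in>set Cs. upper_ok Z C \<and> rwc_sat X (wc_reduct Z C))"
    if "(C0, Cs) \<in> \<Omega>" for C0 Cs l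
    using assms that unfolding wprog_nonneg_def by (intro fsat_freduct_Pi1_body) blast
  show ?thesis
    unfolding psat_preduct_Pi1 rsat_wprog_reduct
    by (rule ball_cong[OF refl]) (clarsimp simp: body)
qed

definition rprog_nonneg :: "'a rrule set \<Rightarrow> bool" where
  "rprog_nonneg R \<longleftrightarrow> (\<forall>(l, Bs)\<in>R. \<forall>(L, S)\<in>set Bs. \<forall>(l', w)\<in>set S. 0 \<le> w)"

lemma rprog_nonneg_wprog_reduct:
  assumes "wprog_nonneg \<Omega>"
  shows "rprog_nonneg (wprog_reduct Z \<Omega>)"
  unfolding rprog_nonneg_def
proof clarify
  fix l Bs L S l' w
  assume "(l, Bs) \<in> wprog_reduct Z \<Omega>" "(L, S) \<in> set Bs" "(l', w) \<in> set S"
  then obtain C0 Cs where "(C0, Cs) \<in> \<Omega>" "Bs = map (wc_reduct Z) Cs"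
    unfolding wprog_reduct_def by (auto simp: mem_wrule_reduct simp del: wrule_reduct.simps)
  with \<open>(L, S) \<in> set Bs\<close> obtain C where "C \<in> set Cs" "wc_reduct Z C = (L, S)"
    by auto
  moreover have "wc_nonneg C"
    using assms \<open>(C0, Cs) \<in> \<Omega>\<close> \<open>C \<in> set Cs\<close> unfolding wprog_nonneg_def by blast
  moreover obtain L0 S0 U0 where "C = WC L0 S0 U0"
    by (cases C)
  ultimately show "0 \<le> w"
    using \<open>(l', w) \<in> set S\<close> by (auto simp: pos_part_def split: elem.splits)
qed

lemma sum_list_filter_mem_mono:
  fixes S :: "('b \<times> real) list"
  assumes "X \<subseteq> Y" and "\<forall>(l, w)\<in>set S. 0 \<le> w"
  shows "sum_list (map snd (filter (\<lambda>(l, w). l \<in> X) S))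
     \<le> sum_list (map snd (filter (\<lambda>(l, w). l \<in> Y) S))"
  using assms by (induction S) auto

lemma rwc_sat_mono:
  assumes "rwc_sat X (L, S)" "X \<subseteq> Y" "\<forall>(l, w)\<in>set S. 0 \<le> w"
  shows "rwc_sat Y (L, S)"
  using assms sum_list_filter_mem_mono[OF assms(2,3)] by (auto intro: order_trans)

lemma rsat_Inter:
  assumes "rprog_nonneg R" and "\<And>X. X \<in> \<X> \<Longrightarrow> rsat X R"
  shows "rsat (\<Inter>\<X>) R"
  unfolding rsat_def
proof clarify
  fix l Bs X
  assume rule: "(l, Bs) \<in> R" and body: "\<forall>B\<in>set Bs. rwc_sat (\<Inter>\<X>) B" and "X \<in> \<X>"
  have "\<forall>B\<in>set Bs. rwc_sat X B"
    using body rule assms(1) \<open>X \<in> \<X>\<close> unfolding rprog_nonneg_def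
    by (fastforce intro: rwc_sat_mono)
  with rule assms(2)[OF \<open>X \<in> \<X>\<close>] show "l \<in> X"
    unfolding rsat_def by blast
qed

lemma cl_eq_Inter_models:
  assumes "rprog_nonneg R"
  shows "cl R = \<Inter>{X. rsat X R}"
  unfolding cl_def using rsat_Inter[OF assms, of "{X. rsat X R}"]
  by (intro the_equality) blast+

lemma consistent_subset: "consistent Y \<Longrightarrow> X \<subseteq> Y \<Longrightarrow> consistent X"
  unfolding consistent_def by blast

lemma answer_sets_nf_of_least_model:
  assumes "psat M P" and "\<And>X. psat X P \<Longrightarrow> M \<subseteq> X"
  shows "{X. answer_set_nf P X} = (if consistent M then {M} else {})"
proof (cases "consistent M")
  case True
  have answer: "answer_set_nf P X \<longleftrightarrow> X = M" for X
  proof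
    assume "answer_set_nf P X"
    then have "psat X P" "\<forall>Y. consistent Y \<and> psat Y P \<and> Y \<subseteq> X \<longrightarrow> Y = X"
      unfolding answer_set_nf_def by auto
    with assms True show "X = M" by blast
  next
    assume "X = M"
    with assms True show "answer_set_nf P X"
      unfolding answer_set_nf_def by blast
  qed
  with True show ?thesis by simp
next
  case False
  have "\<not> answer_set_nf P X" for X
  proof
    assume "answer_set_nf P X"
    then have "consistent X" "psat X P"
      unfolding answer_set_nf_def by auto
    with False show False
      using consistent_subset assms(2) by blast
  qed
  with False show ?thesis by simp
qed

theorem lemma7:
  fixes \<Omega> :: "'a wrule set" and Z :: "'a lit set"
  assumes "wprog_nonneg \<Omega>"
    and "consistent Z"
  shows "(consistent (cl (wprog_reduct Z \<Omega>)) \<longrightarrow>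
            {X. answer_set_nf (preduct Z (Pi1 \<Omega>)) X} = {cl (wprog_reduct Z \<Omega>)})
       \<and> (\<not> consistent (cl (wprog_reduct Z \<Omega>)) \<longrightarrow>
            {X. answer_set_nf (preduct Z (Pi1 \<Omega>)) X} = {})"
proof -
  let ?R = "wprog_reduct Z \<Omega>"
  have models: "psat X (preduct Z (Pi1 \<Omega>)) \<longleftrightarrow> rsat X ?R" for X
    using assms(1) by (rule psat_preduct_Pi1_iff_rsat)
  have cl: "cl ?R = \<Inter>{X. rsat X ?R}"
    using assms(1) by (intro cl_eq_Inter_models rprog_nonneg_wprog_reduct)
  have "psat (cl ?R) (preduct Z (Pi1 \<Omega>))"
    unfolding models cl using assms(1)
    by (intro rsat_Inter rprog_nonneg_wprog_reduct) auto
  moreover have "cl ?R \<subseteq> X" if "psat X (preduct Z (Pi1 \<Omega>))" for X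
    using that unfolding models cl by blast
  ultimately show ?thesis
    by (simp add: answer_sets_nf_of_least_model)
qed

end
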